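(* Let $T$ be a doubly substochastic operator. Then $F_T(x,y):=\int_0^xT\mathbf{1}_{[0,y]}(s)\,ds$, $(x,y)\in\mathbb{R}_+^2$, is a bivariate subdistribution function. If $T$ is additionally equivariant, then $F_T$ is a bivariate tail dependence function, i.e. $F_T(\mathbf{w})=\lim_{s\searrow0}C(s\mathbf{w})/s$ for all $\mathbf{w}\in\mathbb{R}_+^2$ for some $2$-copula $C$.
   Context: $\mathbb{R}_+=[0,\infty)$ with Lebesgue measure; $L^1(\mathbb{R}_+)+L^\infty(\mathbb{R}_+):=\{f+g: f\in L^1(\mathbb{R}_+),g\in L^\infty(\mathbb{R}_+)\}$. A linear operator $T:L^1(\mathbb{R}_+)+L^\infty(\mathbb{R}_+)\to L^1(\mathbb{R}_+)+L^\infty(\mathbb{R}_+)$ is doubly substochastic if (i) $Tf\ge0$ whenever $f\ge0$; (ii) $T(L^1)\subset L^1$ and $T(L^\infty)\subset L^\infty$; (iii) $\|Tf\|_1\le\|f\|_1$ for $f\in L^1$ and $\|Tg\|_\infty\le\|g\|_\infty$ for $g\in L^\infty$; (iv) $Tf=\sup_nTf_n$ whenever $f_n\in L^1\cap L^\infty$, $f\in L^\infty$ and $f_n\nearrow f$. $T$ is equivariant if $T(f\circ\sigma)=(Tf)\circ\sigma$ for all dilations $\sigma(x)=x/s$, $s>0$. A function $F:\mathbb{R}_+^d\to\mathbb{R}_+$ is a subdistribution function if it is nonnegative, $d$-increasing, bounded above by $\min_iw_i$, and Lipschitz with constant $1$ (i.e. $|F(\mathbf{x})-F(\mathbf{y})|\le\sum_i|x_i-y_i|$).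 A bivariate tail dependence function is one of the form $\mathbf{w}\mapsto\lim_{s\searrow0}C(s\mathbf{w})/s$ for a $2$-copula $C$; equivalently, a positively homogeneous (of order $1$) subdistribution function. *)

theory Defs
  imports "HOL-Analysis.Analysis"
begin

text \<open>Lebesgue measure on R_+ = [0,oo). Functions are real-valued functions on the reals;
  only their values on R_+ matter (everything is relative to this measure, and all
  identities between functions are understood almost everywhere).\<close>

definition Rp :: "real measure" where
  "Rp = lebesgue_on {0..}"

definition L1 :: "(real \<Rightarrow> real) set" where
  "L1 = {f. integrable Rp f}"

definition Linf :: "(real \<Rightarrow> real) set" where
  "Linf = {f. f \<in> borel_measurable Rp \<and> (\<exists>C. AE x in Rp. \<bar>f x\<bar> \<le> C)}"

definition L1_plus_Linf :: "(real \<Rightarrow> real) set" where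
  "L1_plus_Linf = {f. \<exists>g h. g \<in> L1 \<and> h \<in> Linf \<and> (AE x in Rp. f x = g x + h x)}"

definition norm1 :: "(real \<Rightarrow> real) \<Rightarrow> real" where
  "norm1 f = (\<integral>x. \<bar>f x\<bar> \<partial>Rp)"

definition norminf :: "(real \<Rightarrow> real) \<Rightarrow> real" where
  "norminf f = Inf {C. AE x in Rp. \<bar>f x\<bar> \<le> C}"

definition doubly_substochastic :: "((real \<Rightarrow> real) \<Rightarrow> (real \<Rightarrow> real)) \<Rightarrow> bool" where
  "doubly_substochastic T \<longleftrightarrow>
     \<comment> \<open>T maps L1+Linf into L1+Linf\<close>
     (\<forall>f\<in>L1_plus_Linf. T f \<in> L1_plus_Linf) \<and>
     \<comment> \<open>linearity (as operator on a.e.-classes)\<close>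
     (\<forall>f\<in>L1_plus_Linf. \<forall>g\<in>L1_plus_Linf. \<forall>a b::real.
        AE x in Rp. T (\<lambda>t. a * f t + b * g t) x = a * T f x + b * T g x) \<and>
     \<comment> \<open>(i) positivity\<close>
     (\<forall>f\<in>L1_plus_Linf. (AE x in Rp. f x \<ge> 0) \<longrightarrow> (AE x in Rp. T f x \<ge> 0)) \<and>
     \<comment> \<open>(ii) invariance of L1 and Linf\<close>
     (\<forall>f\<in>L1. T f \<in> L1) \<and> (\<forall>g\<in>Linf. T g \<in> Linf) \<and>
     \<comment> \<open>(iii) contractivity\<close>
     (\<forall>f\<in>L1. norm1 (T f) \<le> norm1 f) \<and> (\<forall>g\<in>Linf. norminf (T g) \<le> norminf g) \<and>
     \<comment> \<open>(iv) order continuity\<close>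
     (\<forall>fs f. (\<forall>n. fs n \<in> L1 \<inter> Linf) \<longrightarrow> f \<in> Linf \<longrightarrow>
        (AE x in Rp. incseq (\<lambda>n. fs n x) \<and> (\<lambda>n. fs n x) \<longlonglongrightarrow> f x) \<longrightarrow>
        (AE x in Rp. T f x = (SUP n. T (fs n) x)))"

definition equivariant :: "((real \<Rightarrow> real) \<Rightarrow> (real \<Rightarrow> real)) \<Rightarrow> bool" where
  "equivariant T \<longleftrightarrow>
     (\<forall>f\<in>L1_plus_Linf. \<forall>s::real. s > 0 \<longrightarrow>
        (AE x in Rp. T (\<lambda>t. f (t / s)) x = T f (x / s)))"

definition F_op :: "((real \<Rightarrow> real) \<Rightarrow> (real \<Rightarrow> real)) \<Rightarrow> real \<Rightarrow> real \<Rightarrow> real" where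
  "F_op T x y = (\<integral>s\<in>{0..x}. T (indicator {0..y}) s \<partial>lebesgue)"

definition subdistribution2 :: "(real \<Rightarrow> real \<Rightarrow> real) \<Rightarrow> bool" where
  "subdistribution2 F \<longleftrightarrow>
     (\<forall>x\<ge>0. \<forall>y\<ge>0. 0 \<le> F x y) \<and>
     (\<forall>x1 x2 y1 y2. 0 \<le> x1 \<longrightarrow> x1 \<le> x2 \<longrightarrow> 0 \<le> y1 \<longrightarrow> y1 \<le> y2 \<longrightarrow>
        F x2 y2 - F x1 y2 - F x2 y1 + F x1 y1 \<ge> 0) \<and>
     (\<forall>x\<ge>0. \<forall>y\<ge>0. F x y \<le> min x y) \<and>
     (\<forall>x\<ge>0. \<forall>y\<ge>0. \<forall>x'\<ge>0. \<forall>y'\<ge>0. \<bar>F x y - F x' y'\<bar> \<le> \<bar>x - x'\<bar> + \<bar>y - y'\<bar>)"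

definition copula2 :: "(real \<Rightarrow> real \<Rightarrow> real) \<Rightarrow> bool" where
  "copula2 C \<longleftrightarrow>
     (\<forall>u\<in>{0..1}. C u 0 = 0 \<and> C 0 u = 0 \<and> C u 1 = u \<and> C 1 u = u) \<and>
     (\<forall>u1 u2 v1 v2. 0 \<le> u1 \<longrightarrow> u1 \<le> u2 \<longrightarrow> u2 \<le> 1 \<longrightarrow> 0 \<le> v1 \<longrightarrow> v1 \<le> v2 \<longrightarrow> v2 \<le> 1 \<longrightarrow>
        C u2 v2 - C u1 v2 - C u2 v1 + C u1 v1 \<ge> 0)"

definition tail_dependence2 :: "(real \<Rightarrow> real \<Rightarrow> real) \<Rightarrow> bool" where
  "tail_dependence2 F \<longleftrightarrow>
     (\<exists>C. copula2 C \<and>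
        (\<forall>x\<ge>0. \<forall>y\<ge>0. ((\<lambda>s. C (s * x) (s * y) / s) \<longlongrightarrow> F x y) (at_right 0)))"

end

theory Submission
  imports Defs
begin

text \<open>
  \<open>F_T(x, y)\<close> is the mass \<open>\<integral>\<^sub>A T 1\<^sub>B\<close> of the rectangle \<open>A \<times> B = [0, x] \<times> [0, y]\<close>.
  This rectangle mass is additive in \<open>A\<close> (as an integral) and in \<open>B\<close> (by linearity of \<open>T\<close>),
  nonnegative (positivity), at most \<open>|A|\<close> because \<open>0 \<le> T 1\<^sub>B \<le> 1\<close> (contractivity in \<open>L\<^sup>\<infinity>\<close>) and at
  most \<open>|B|\<close> (contractivity in \<open>L\<^sup>1\<close>). Every increment of \<open>F_T\<close> is the mass of a rectangle,
  which yields all properties of a subdistribution function. Equivariance makes \<open>F_T\<close> positively homogeneous (substitute \<open>t \<mapsto> t / s\<close> in the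
  integral). A homogeneous subdistribution function \<open>F\<close> is the tail dependence function of
  the copula \<open>C(u, v) = F(u, v) + (u - F(u, 1)) (v - F(1, v)) / (1 - F(1, 1))\<close>: the correction
  term is a product of two increasing functions that repairs the margins, and along \<open>s w\<close> it
  is \<open>O(s\<^sup>2)\<close>, so it disappears in the limit of \<open>C(s w) / s\<close>.
\<close>

lemma sets_RpI: "A \<in> sets lebesgue \<Longrightarrow> A \<subseteq> {0..} \<Longrightarrow> A \<in> sets Rp"
  unfolding Rp_def by (simp add: sets_restrict_space_iff)

lemma emeasure_Rp: "A \<subseteq> {0..} \<Longrightarrow> emeasure Rp A = emeasure lebesgue A"
  unfolding Rp_def by (simp add: emeasure_restrict_space)

lemma measure_Rp: "A \<subseteq> {0..} \<Longrightarrow> measure Rp A = measure lebesgue A"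
  unfolding Rp_def by (simp add: measure_restrict_space)

lemma fmeasurable_RpI:
  assumes "A \<in> sets lebesgue" and "A \<subseteq> {0..b}"
  shows "A \<in> fmeasurable Rp"
proof (rule fmeasurableI)
  show "A \<in> sets Rp"
    using assms by (intro sets_RpI) auto
  have "emeasure Rp A \<le> emeasure Rp {0..b}"
    using assms by (intro emeasure_mono sets_RpI) auto
  also have "\<dots> < \<infinity>"
    by (cases "0 \<le> b") (auto simp: emeasure_Rp)
  finally show "emeasure Rp A < \<infinity>" .
qed

lemma fmeasurable_Rp_Icc: "{0..b} \<in> fmeasurable Rp"
  by (rule fmeasurable_RpI) auto

lemma fmeasurable_Rp_Ioc: "0 \<le> a \<Longrightarrow> {a<..b} \<in> fmeasurable Rp"
  by (rule fmeasurable_RpI) auto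

lemma measure_Rp_Icc: "0 \<le> b \<Longrightarrow> measure Rp {0..b} = b"
  by (simp add: measure_Rp)

lemma measure_Rp_Ioc: "0 \<le> a \<Longrightarrow> a \<le> b \<Longrightarrow> measure Rp {a<..b} = b - a"
  by (subst measure_Rp) auto

lemma set_integrable_lebesgue_if_Rp:
  fixes f :: "real \<Rightarrow> real"
  assumes "set_integrable Rp A f" "A \<subseteq> {0..}"
  shows "set_integrable lebesgue A f"
proof -
  have "integrable lebesgue (\<lambda>x. indicator {0..} x *\<^sub>R (indicator A x *\<^sub>R f x))"
    using assms(1) unfolding set_integrable_def Rp_def by (subst (asm) integrable_restrict_space) auto
  moreover have "(\<lambda>x. indicator {0..} x *\<^sub>R (indicator A x *\<^sub>R f x)) = (\<lambda>x. indicator A x *\<^sub>R f x)"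
    using assms(2) by (auto simp: fun_eq_iff indicator_def)
  ultimately show ?thesis
    unfolding set_integrable_def by simp
qed

lemma not_AE_Rp_False: "\<not> (AE x in Rp. False)"
proof
  assume "AE x in Rp. False"
  then have "AE x in Rp. x \<notin> {0..1}"
    by (rule eventually_mono) simp
  then have "emeasure Rp {0..1} = 0"
    using AE_iff_null_sets fmeasurable_Rp_Icc by blast
  moreover have "emeasure Rp {0..1} = 1"
    by (simp add: emeasure_Rp)
  ultimately show False
    by simp
qed

lemma AE_abs_le_imp_nonneg:
  fixes f :: "real \<Rightarrow> real"
  assumes "AE x in Rp. \<bar>f x\<bar> \<le> C"
  shows "0 \<le> C"
proof (rule ccontr)
  assume "\<not> 0 \<le> C"
  with assms have "AE x in Rp. False"
    by (rule_tac eventually_mono) auto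
  with not_AE_Rp_False show False ..
qed

lemma bdd_below_AE_abs_bounds:
  fixes f :: "real \<Rightarrow> real"
  shows "bdd_below {C. AE x in Rp. \<bar>f x\<bar> \<le> C}"
  unfolding bdd_below_def using AE_abs_le_imp_nonneg by blast

lemma norminf_le:
  fixes f :: "real \<Rightarrow> real"
  shows "AE x in Rp. \<bar>f x\<bar> \<le> C \<Longrightarrow> norminf f \<le> C"
  unfolding norminf_def by (rule cInf_lower) (auto intro: bdd_below_AE_abs_bounds)

lemma AE_abs_le_norminf:
  assumes "f \<in> Linf"
  shows "AE x in Rp. \<bar>f x\<bar> \<le> norminf f"
proof -
  let ?S = "{C. AE x in Rp. \<bar>f x\<bar> \<le> C}"
  have "?S \<noteq> {}"
    using assms by (auto simp: Linf_def)
  have "AE x in Rp. \<bar>f x\<bar> \<le> norminf f + inverse (Suc n)" for n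
  proof -
    have "Inf ?S < norminf f + inverse (Suc n)"
      by (simp add: norminf_def)
    then obtain C where "AE x in Rp. \<bar>f x\<bar> \<le> C" "C < norminf f + inverse (Suc n)"
      using cInf_lessD[OF \<open>?S \<noteq> {}\<close>] by blast
    then show ?thesis
      by (auto elim: eventually_mono)
  qed
  then have "AE x in Rp. \<forall>n. \<bar>f x\<bar> \<le> norminf f + inverse (Suc n)"
    by (simp add: AE_all_countable)
  then show ?thesis
  proof (rule eventually_mono)
    fix x
    assume "\<forall>n. \<bar>f x\<bar> \<le> norminf f + inverse (Suc n)"
    moreover have "(\<lambda>n. norminf f + inverse (Suc n)) \<longlonglongrightarrow> norminf f"
      using tendsto_add[OF tendsto_const LIMSEQ_inverse_real_of_nat] by simp
    ultimately show "\<bar>f x\<bar> \<le> norminf f"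
      by (intro LIMSEQ_le_const) auto
  qed
qed

lemma Linf_subset_L1_plus_Linf: "Linf \<subseteq> L1_plus_Linf"
  unfolding L1_plus_Linf_def L1_def by force

lemma indicator_in_L1: "A \<in> fmeasurable Rp \<Longrightarrow> indicator A \<in> L1"
  by (auto simp: L1_def fmeasurable_def)

lemma indicator_in_Linf: "A \<in> sets Rp \<Longrightarrow> indicator A \<in> Linf"
  unfolding Linf_def by (auto intro!: exI[of _ 1])

lemma norm1_indicator: "A \<in> sets Rp \<Longrightarrow> norm1 (indicator A) = measure Rp A"
  by (simp add: norm1_def Int_absorb2 sets.sets_into_space)

lemma norminf_indicator_le: "norminf (indicator A) \<le> 1"
  by (rule norminf_le) simp

lemma doubly_substochasticD:
  assumes "doubly_substochastic T"
  shows doubly_substochastic_linear: "\<And>f g a b. f \<in> L1_plus_Linf \<Longrightarrow> g \<in> L1_plus_Linf \<Longrightarrow>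
      AE x in Rp. T (\<lambda>t. a * f t + b * g t) x = a * T f x + b * T g x"
    and doubly_substochastic_nonneg: "\<And>f. f \<in> L1_plus_Linf \<Longrightarrow> AE x in Rp. 0 \<le> f x \<Longrightarrow>
      AE x in Rp. 0 \<le> T f x"
    and doubly_substochastic_L1: "\<And>f. f \<in> L1 \<Longrightarrow> T f \<in> L1"
    and doubly_substochastic_Linf: "\<And>f. f \<in> Linf \<Longrightarrow> T f \<in> Linf"
    and doubly_substochastic_norm1_le: "\<And>f. f \<in> L1 \<Longrightarrow> norm1 (T f) \<le> norm1 f"
    and doubly_substochastic_norminf_le: "\<And>f. f \<in> Linf \<Longrightarrow> norminf (T f) \<le> norminf f"
  using assms unfolding doubly_substochastic_def by simp_all

definition op_mass :: "((real \<Rightarrow> real) \<Rightarrow> real \<Rightarrow> real) \<Rightarrow> real set \<Rightarrow> real set \<Rightarrow> real" where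
  "op_mass T A B = (LINT s:A|Rp. T (indicator B) s)"

lemma F_op_eq_op_mass: "F_op T x y = op_mass T {0..x} {0..y}"
proof -
  have "op_mass T {0..x} {0..y} = (LINT s:{0..x}|lebesgue. indicator {0..} s *\<^sub>R T (indicator {0..y}) s)"
    unfolding op_mass_def Rp_def by (simp add: set_integral_restrict_space)
  also have "\<dots> = F_op T x y"
    unfolding F_op_def by (rule set_lebesgue_integral_cong) auto
  finally show ?thesis ..
qed

lemma equivariant_indicator_Icc:
  assumes "equivariant T" "0 < s"
  shows "AE t in Rp. T (indicator {0..s * y}) t = T (indicator {0..y}) (t / s)"
proof -
  have "indicator {0..y} \<in> L1_plus_Linf"
    using Linf_subset_L1_plus_Linf indicator_in_Linf fmeasurable_Rp_Icc by blast
  then have "AE t in Rp. T (\<lambda>t. indicator {0..y} (t / s)) t = T (indicator {0..y}) (t / s)"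
    using assms unfolding equivariant_def by blast
  moreover have "(\<lambda>t. indicator {0..y} (t / s)) = (indicator {0..s * y} :: real \<Rightarrow> real)"
    using assms(2) by (auto simp: fun_eq_iff indicator_def field_simps)
  ultimately show ?thesis
    by simp
qed

context
  fixes T :: "(real \<Rightarrow> real) \<Rightarrow> real \<Rightarrow> real"
  assumes T: "doubly_substochastic T"
begin

lemma T_indicator_nonneg_le_one:
  assumes "A \<in> sets Rp"
  shows "AE x in Rp. 0 \<le> T (indicator A) x \<and> T (indicator A) x \<le> 1"
proof -
  have Linf: "indicator A \<in> Linf"
    using assms by (rule indicator_in_Linf)
  have le_one: "norminf (T (indicator A)) \<le> 1"
    using doubly_substochastic_norminf_le[OF T Linf] norminf_indicator_le[of A] by linarith
  have "AE x in Rp. 0 \<le> T (indicator A) x"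
    using Linf Linf_subset_L1_plus_Linf by (intro doubly_substochastic_nonneg[OF T]) auto
  moreover have "AE x in Rp. \<bar>T (indicator A) x\<bar> \<le> norminf (T (indicator A))"
    using Linf by (intro AE_abs_le_norminf doubly_substochastic_Linf[OF T])
  ultimately show ?thesis
    by eventually_elim (use le_one in auto)
qed

lemma integrable_T_indicator: "A \<in> fmeasurable Rp \<Longrightarrow> integrable Rp (T (indicator A))"
  using doubly_substochastic_L1[OF T indicator_in_L1] by (simp add: L1_def)

lemma norm1_T_indicator_le: "A \<in> fmeasurable Rp \<Longrightarrow> norm1 (T (indicator A)) \<le> measure Rp A"
  using doubly_substochastic_norm1_le[OF T indicator_in_L1] by (simp add: norm1_indicator)

lemma T_indicator_Un:
  assumes "B1 \<in> sets Rp" "B2 \<in> sets Rp" "B1 \<inter> B2 = {}"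
  shows "AE x in Rp. T (indicator (B1 \<union> B2)) x = T (indicator B1) x + T (indicator B2) x"
proof -
  have "indicator B1 \<in> L1_plus_Linf" "indicator B2 \<in> L1_plus_Linf"
    using assms indicator_in_Linf Linf_subset_L1_plus_Linf by auto
  from doubly_substochastic_linear[OF T this, of 1 1]
  have "AE x in Rp. T (\<lambda>t. indicator B1 t + indicator B2 t) x = T (indicator B1) x + T (indicator B2) x"
    by simp
  moreover have "(\<lambda>t. indicator B1 t + indicator B2 t) = (indicator (B1 \<union> B2) :: real \<Rightarrow> real)"
    using assms(3) by (auto simp: fun_eq_iff indicator_def)
  ultimately show ?thesis
    by simp
qed

lemma set_integrable_T_indicator:
  "A \<in> sets Rp \<Longrightarrow> B \<in> fmeasurable Rp \<Longrightarrow> set_integrable Rp A (T (indicator B))"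
  unfolding set_integrable_def by (intro integrable_mult_indicator integrable_T_indicator)

lemma op_mass_nonneg:
  assumes "A \<in> sets Rp" "B \<in> fmeasurable Rp"
  shows "0 \<le> op_mass T A B"
  unfolding op_mass_def set_lebesgue_integral_def
  using T_indicator_nonneg_le_one[of B] assms
  by (intro integral_nonneg_AE) (auto elim: eventually_mono)

lemma op_mass_le_measure_left:
  assumes "A \<in> fmeasurable Rp" "B \<in> fmeasurable Rp"
  shows "op_mass T A B \<le> measure Rp A"
proof -
  have "op_mass T A B \<le> (LINT s:A|Rp. 1)"
    unfolding op_mass_def
  proof (rule set_integral_mono_AE)
    show "set_integrable Rp A (T (indicator B))"
      using assms by (intro set_integrable_T_indicator) auto
    show "set_integrable Rp A (\<lambda>_. 1::real)"
      using assms by (simp add: set_integrable_def fmeasurable_def)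
    show "AE x\<in>A in Rp. T (indicator B) x \<le> 1"
      using T_indicator_nonneg_le_one[of B] assms by (auto elim: eventually_mono)
  qed
  also have "\<dots> = measure Rp A"
    using assms(1) by (simp add: set_integral_const fmeasurableD2)
  finally show ?thesis .
qed

lemma op_mass_le_measure_right:
  assumes "A \<in> sets Rp" "B \<in> fmeasurable Rp"
  shows "op_mass T A B \<le> measure Rp B"
proof -
  have "op_mass T A B \<le> norm1 (T (indicator B))"
    unfolding op_mass_def set_lebesgue_integral_def norm1_def
    using assms set_integrable_T_indicator[unfolded set_integrable_def]
    by (intro integral_mono) (auto simp: integrable_T_indicator indicator_def)
  also have "\<dots> \<le> measure Rp B"
    using assms(2) by (rule norm1_T_indicator_le)
  finally show ?thesis .
qed

lemma op_mass_Un_left: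
  assumes "A1 \<in> sets Rp" "A2 \<in> sets Rp" "A1 \<inter> A2 = {}" "B \<in> fmeasurable Rp"
  shows "op_mass T (A1 \<union> A2) B = op_mass T A1 B + op_mass T A2 B"
  unfolding op_mass_def using assms by (intro set_integral_Un set_integrable_T_indicator)

lemma op_mass_Un_right:
  assumes "A \<in> sets Rp" "B1 \<in> fmeasurable Rp" "B2 \<in> fmeasurable Rp" "B1 \<inter> B2 = {}"
  shows "op_mass T A (B1 \<union> B2) = op_mass T A B1 + op_mass T A B2"
proof -
  have "op_mass T A (B1 \<union> B2) = (LINT s:A|Rp. T (indicator B1) s + T (indicator B2) s)"
    unfolding op_mass_def using T_indicator_Un[of B1 B2] assms
    by (intro set_lebesgue_integral_cong_AE)
      (auto intro!: borel_measurable_integrable integrable_T_indicator fmeasurable.Un elim: eventually_mono)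
  also have "\<dots> = op_mass T A B1 + op_mass T A B2"
    unfolding op_mass_def using assms by (intro set_integral_add set_integrable_T_indicator)
  finally show ?thesis .
qed

lemma F_op_diff_left:
  assumes "0 \<le> x1" "x1 \<le> x2"
  shows "F_op T x2 y - F_op T x1 y = op_mass T {x1<..x2} {0..y}"
proof -
  have "{0..x2} = {0..x1} \<union> {x1<..x2}" "{0..x1} \<inter> {x1<..x2} = {}"
    using assms by auto
  then show ?thesis
    using assms op_mass_Un_left[of "{0..x1}" "{x1<..x2}" "{0..y}"]
    by (simp add: F_op_eq_op_mass fmeasurable_Rp_Icc fmeasurable_Rp_Ioc fmeasurableD)
qed

lemma F_op_diff_right:
  assumes "0 \<le> y1" "y1 \<le> y2"
  shows "F_op T x y2 - F_op T x y1 = op_mass T {0..x} {y1<..y2}"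
proof -
  have "{0..y2} = {0..y1} \<union> {y1<..y2}" "{0..y1} \<inter> {y1<..y2} = {}"
    using assms by auto
  then show ?thesis
    using assms op_mass_Un_right[of "{0..x}" "{0..y1}" "{y1<..y2}"]
    by (simp add: F_op_eq_op_mass fmeasurable_Rp_Icc fmeasurable_Rp_Ioc fmeasurableD)
qed

lemma F_op_rectangle:
  assumes "0 \<le> x1" "x1 \<le> x2" "0 \<le> y1" "y1 \<le> y2"
  shows "F_op T x2 y2 - F_op T x1 y2 - F_op T x2 y1 + F_op T x1 y1 = op_mass T {x1<..x2} {y1<..y2}"
proof -
  have "{0..y2} = {0..y1} \<union> {y1<..y2}" "{0..y1} \<inter> {y1<..y2} = {}"
    using assms by auto
  then show ?thesis
    using assms F_op_diff_left[of x1 x2] op_mass_Un_right[of "{x1<..x2}" "{0..y1}" "{y1<..y2}"]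
    by (simp add: fmeasurable_Rp_Icc fmeasurable_Rp_Ioc fmeasurableD algebra_simps)
qed

lemma F_op_diff_left_bounds:
  assumes "0 \<le> x1" "x1 \<le> x2"
  shows "0 \<le> F_op T x2 y - F_op T x1 y \<and> F_op T x2 y - F_op T x1 y \<le> x2 - x1"
proof -
  have "0 \<le> op_mass T {x1<..x2} {0..y}" "op_mass T {x1<..x2} {0..y} \<le> measure Rp {x1<..x2}"
    using assms by (auto intro!: op_mass_nonneg op_mass_le_measure_left
        fmeasurable_Rp_Icc fmeasurable_Rp_Ioc fmeasurableD)
  then show ?thesis
    using F_op_diff_left[OF assms] measure_Rp_Ioc[OF assms] by simp
qed

lemma F_op_diff_right_bounds:
  assumes "0 \<le> y1" "y1 \<le> y2"
  shows "0 \<le> F_op T x y2 - F_op T x y1 \<and> F_op T x y2 - F_op T x y1 \<le> y2 - y1"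
proof -
  have "0 \<le> op_mass T {0..x} {y1<..y2}" "op_mass T {0..x} {y1<..y2} \<le> measure Rp {y1<..y2}"
    using assms by (auto intro!: op_mass_nonneg op_mass_le_measure_right
        fmeasurable_Rp_Icc fmeasurable_Rp_Ioc fmeasurableD)
  then show ?thesis
    using F_op_diff_right[OF assms] measure_Rp_Ioc[OF assms] by simp
qed

lemma subdistribution2_F_op: "subdistribution2 (F_op T)"
proof -
  note intervals = fmeasurable_Rp_Icc fmeasurable_Rp_Ioc fmeasurableD
  show ?thesis
    unfolding subdistribution2_def
  proof (intro conjI allI impI)
    fix x y :: real
    assume "0 \<le> x" "0 \<le> y"
    moreover have "0 \<le> op_mass T {0..x} {0..y}" "op_mass T {0..x} {0..y} \<le> measure Rp {0..x}"
      "op_mass T {0..x} {0..y} \<le> measure Rp {0..y}"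
      by (auto intro!: op_mass_nonneg op_mass_le_measure_left op_mass_le_measure_right intervals)
    ultimately show "0 \<le> F_op T x y" "F_op T x y \<le> min x y"
      by (simp_all add: F_op_eq_op_mass measure_Rp_Icc)
  next
    fix x1 x2 y1 y2 :: real
    assume "0 \<le> x1" "x1 \<le> x2" "0 \<le> y1" "y1 \<le> y2"
    then show "0 \<le> F_op T x2 y2 - F_op T x1 y2 - F_op T x2 y1 + F_op T x1 y1"
      by (auto simp: F_op_rectangle intro!: op_mass_nonneg intervals)
  next
    fix x y x' y' :: real
    assume "0 \<le> x" "0 \<le> y" "0 \<le> x'" "0 \<le> y'"
    then have "\<bar>F_op T x y - F_op T x' y\<bar> \<le> \<bar>x - x'\<bar>" "\<bar>F_op T x' y - F_op T x' y'\<bar> \<le> \<bar>y - y'\<bar>"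
      using F_op_diff_left_bounds[of x x' y] F_op_diff_left_bounds[of x' x y]
        F_op_diff_right_bounds[of y y' x'] F_op_diff_right_bounds[of y' y x']
      by (cases "x \<le> x'"; cases "y \<le> y'"; simp)+
    then show "\<bar>F_op T x y - F_op T x' y'\<bar> \<le> \<bar>x - x'\<bar> + \<bar>y - y'\<bar>"
      by linarith
  qed
qed

lemma F_op_has_integral: "(T (indicator {0..y}) has_integral F_op T x y) {0..x}"
proof -
  have "set_integrable lebesgue {0..x} (T (indicator {0..y}))"
    by (auto intro!: set_integrable_lebesgue_if_Rp set_integrable_T_indicator
        fmeasurable_Rp_Icc fmeasurableD)
  then show ?thesis
    unfolding F_op_def by (simp add: set_lebesgue_integral_eq_integral integrable_integral)
qed

lemma F_op_scale:
  assumes "equivariant T" "0 < s"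
  shows "F_op T (s * x) (s * y) = s * F_op T x y"
proof -
  let ?G = "T (indicator {0..y})" and ?H = "T (indicator {0..s * y})"
  have "((\<lambda>t. ?G (inverse s * t)) has_integral (1 / \<bar>inverse s\<bar>) *\<^sub>R F_op T x y)
      ((\<lambda>t. t / inverse s) ` {0..x})"
    using assms(2) by (intro has_integral_stretch_real F_op_has_integral) simp
  moreover have "(\<lambda>t. t / inverse s) ` {0..x} = {0..s * x}"
    using assms(2) by (subst image_divide_atLeastAtMost) (simp_all add: divide_inverse mult.commute)
  ultimately have G: "((\<lambda>t. ?G (t / s)) has_integral s * F_op T x y) {0..s * x}"
    using assms(2) by (simp add: field_simps)
  have "AE t in lebesgue. t \<in> {0..} \<longrightarrow> ?H t = ?G (t / s)"
    using equivariant_indicator_Icc[OF assms] unfolding Rp_def by (simp add: AE_restrict_space_iff)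
  then obtain N where N: "\<And>t. t \<in> space lebesgue - N \<Longrightarrow> t \<in> {0..} \<longrightarrow> ?H t = ?G (t / s)"
    "N \<in> null_sets lebesgue"
    by (erule AE_E3)
  have "(?H has_integral s * F_op T x y) {0..s * x}"
    using N by (intro has_integral_spike[OF _ _ G, of N]) (auto simp: negligible_iff_null_sets)
  moreover have "(?H has_integral F_op T (s * x) (s * y)) {0..s * x}"
    by (rule F_op_has_integral)
  ultimately show ?thesis
    using has_integral_unique by blast
qed

end

lemma subdistribution2D:
  assumes "subdistribution2 F"
  shows subdistribution2_nonneg: "\<And>x y. 0 \<le> x \<Longrightarrow> 0 \<le> y \<Longrightarrow> 0 \<le> F x y"
    and subdistribution2_rectangle: "\<And>x1 x2 y1 y2. 0 \<le> x1 \<Longrightarrow> x1 \<le> x2 \<Longrightarrow> 0 \<le> y1 \<Longrightarrow> y1 \<le> y2 \<Longrightarrow>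
      0 \<le> F x2 y2 - F x1 y2 - F x2 y1 + F x1 y1"
    and subdistribution2_le_min: "\<And>x y. 0 \<le> x \<Longrightarrow> 0 \<le> y \<Longrightarrow> F x y \<le> min x y"
    and subdistribution2_lipschitz: "\<And>x y x' y'. 0 \<le> x \<Longrightarrow> 0 \<le> y \<Longrightarrow> 0 \<le> x' \<Longrightarrow> 0 \<le> y' \<Longrightarrow>
      \<bar>F x y - F x' y'\<bar> \<le> \<bar>x - x'\<bar> + \<bar>y - y'\<bar>"
  using assms unfolding subdistribution2_def by simp_all

lemma subdistribution2_defect_left:
  assumes "subdistribution2 F" "0 \<le> u" "u \<le> u'" "0 \<le> v"
  shows "0 \<le> u - F u v" "u - F u v \<le> u" "u - F u v \<le> u' - F u' v"
  using subdistribution2_le_min[OF assms(1), of u v] subdistribution2_nonneg[OF assms(1), of u v]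
    subdistribution2_lipschitz[OF assms(1), of u v u' v] assms(2-4) by auto

lemma subdistribution2_defect_right:
  assumes "subdistribution2 F" "0 \<le> v" "v \<le> v'" "0 \<le> u"
  shows "0 \<le> v - F u v" "v - F u v \<le> v" "v - F u v \<le> v' - F u v'"
  using subdistribution2_le_min[OF assms(1), of u v] subdistribution2_nonneg[OF assms(1), of u v]
    subdistribution2_lipschitz[OF assms(1), of u v u v'] assms(2-4) by auto

text \<open>If \<open>F 1 1 = 1\<close> the division yields \<open>0\<close>; then the Lipschitz bound forces \<open>F u 1 = u\<close> and
  \<open>F 1 v = v\<close> on \<open>[0, 1]\<close>, so no correction of the margins is needed.\<close>

definition copula_completion :: "(real \<Rightarrow> real \<Rightarrow> real) \<Rightarrow> real \<Rightarrow> real \<Rightarrow> real" where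
  "copula_completion F u v = F u v + (u - F u 1) * (v - F 1 v) / (1 - F 1 1)"

lemma copula_completion_margins:
  assumes F: "subdistribution2 F" and u: "0 \<le> u" "u \<le> 1"
  shows "copula_completion F u 0 = 0" "copula_completion F 0 u = 0"
    and "copula_completion F u 1 = u" "copula_completion F 1 u = u"
proof -
  have F0: "F t 0 = 0" "F 0 t = 0" if "0 \<le> t" for t
    using that subdistribution2_nonneg[OF F, of t 0] subdistribution2_le_min[OF F, of t 0]
      subdistribution2_nonneg[OF F, of 0 t] subdistribution2_le_min[OF F, of 0 t] by auto
  show "copula_completion F u 0 = 0" "copula_completion F 0 u = 0"
    using F0[OF u(1)] F0[of 1] by (simp_all add: copula_completion_def)
  show "copula_completion F u 1 = u"
  proof (cases "F 1 1 = 1")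
    case True
    then have "F u 1 = u"
      using u subdistribution2_lipschitz[OF F, of u 1 1 1] subdistribution2_le_min[OF F, of u 1] by simp
    then show ?thesis
      by (simp add: copula_completion_def)
  qed (simp add: copula_completion_def)
  show "copula_completion F 1 u = u"
  proof (cases "F 1 1 = 1")
    case True
    then have "F 1 u = u"
      using u subdistribution2_lipschitz[OF F, of 1 u 1 1] subdistribution2_le_min[OF F, of 1 u] by simp
    then show ?thesis
      by (simp add: copula_completion_def)
  qed (simp add: copula_completion_def)
qed

lemma copula_completion_rectangle:
  assumes F: "subdistribution2 F" and uv: "0 \<le> u1" "u1 \<le> u2" "0 \<le> v1" "v1 \<le> v2"
  shows "0 \<le> copula_completion F u2 v2 - copula_completion F u1 v2
    - copula_completion F u2 v1 + copula_completion F u1 v1"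
proof -
  define k where "k = 1 / (1 - F 1 1)"
  have C: "copula_completion F u v = F u v + k * ((u - F u 1) * (v - F 1 v))" for u v
    by (simp add: copula_completion_def k_def)
  have "0 \<le> k"
    using subdistribution2_le_min[OF F, of 1 1] by (simp add: k_def)
  moreover have "0 \<le> (u2 - F u2 1) - (u1 - F u1 1)" "0 \<le> (v2 - F 1 v2) - (v1 - F 1 v1)"
    using subdistribution2_defect_left[OF F uv(1,2)] subdistribution2_defect_right[OF F uv(3,4)]
    by simp_all
  ultimately have "0 \<le> k * (((u2 - F u2 1) - (u1 - F u1 1)) * ((v2 - F 1 v2) - (v1 - F 1 v1)))"
    by simp
  moreover have "0 \<le> F u2 v2 - F u1 v2 - F u2 v1 + F u1 v1"
    using uv by (intro subdistribution2_rectangle[OF F])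
  ultimately show ?thesis
    by (simp add: C algebra_simps)
qed

lemma copula2_copula_completion: "subdistribution2 F \<Longrightarrow> copula2 (copula_completion F)"
  unfolding copula2_def by (simp add: copula_completion_margins copula_completion_rectangle)

lemma copula_completion_correction_bounds:
  assumes F: "subdistribution2 F" and "0 \<le> u" "0 \<le> v"
  shows "0 \<le> copula_completion F u v - F u v"
    and "copula_completion F u v - F u v \<le> u * v / (1 - F 1 1)"
proof -
  have "0 \<le> 1 - F 1 1"
    using subdistribution2_le_min[OF F, of 1 1] by simp
  note du = subdistribution2_defect_left[OF F \<open>0 \<le> u\<close> order_refl zero_le_one]
  note dv = subdistribution2_defect_right[OF F \<open>0 \<le> v\<close> order_refl zero_le_one]
  have "(u - F u 1) * (v - F 1 v) \<le> u * v"
    using du dv by (intro mult_mono) auto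
  with du dv \<open>0 \<le> 1 - F 1 1\<close> show "0 \<le> copula_completion F u v - F u v"
    and "copula_completion F u v - F u v \<le> u * v / (1 - F 1 1)"
    by (simp_all add: copula_completion_def divide_right_mono)
qed

lemma tendsto_copula_completion:
  assumes F: "subdistribution2 F"
    and hom: "\<And>s x y. 0 < s \<Longrightarrow> 0 \<le> x \<Longrightarrow> 0 \<le> y \<Longrightarrow> F (s * x) (s * y) = s * F x y"
    and xy: "0 \<le> x" "0 \<le> y"
  shows "((\<lambda>s. copula_completion F (s * x) (s * y) / s) \<longlongrightarrow> F x y) (at_right 0)"
proof -
  define r where "r s = (copula_completion F (s * x) (s * y) - F (s * x) (s * y)) / s" for s
  have pos: "\<forall>\<^sub>F s in at_right 0. 0 < (s::real)"
    by (simp add: eventually_at_right_less)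
  have r_bounds: "0 \<le> r s \<and> r s \<le> x * y / (1 - F 1 1) * s" if "0 < s" for s
    using copula_completion_correction_bounds[OF F, of "s * x" "s * y"] that xy
    by (simp add: r_def divide_le_eq field_simps)
  have "(r \<longlongrightarrow> 0) (at_right 0)"
  proof (rule tendsto_sandwich)
    show "\<forall>\<^sub>F s in at_right 0. 0 \<le> r s" "\<forall>\<^sub>F s in at_right 0. r s \<le> x * y / (1 - F 1 1) * s"
      using pos by (auto elim!: eventually_mono dest: r_bounds)
    have "((\<lambda>s. x * y / (1 - F 1 1) * s) \<longlongrightarrow> x * y / (1 - F 1 1) * 0) (at_right 0)"
      by (intro tendsto_intros)
    then show "((\<lambda>s. x * y / (1 - F 1 1) * s) \<longlongrightarrow> 0) (at_right 0)"
      by simp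
  qed simp
  then have "((\<lambda>s. F x y + r s) \<longlongrightarrow> F x y) (at_right 0)"
    using tendsto_add[OF tendsto_const] by fastforce
  moreover have "\<forall>\<^sub>F s in at_right 0. F x y + r s = copula_completion F (s * x) (s * y) / s"
    using pos by (auto elim!: eventually_mono simp: r_def hom xy diff_divide_distrib)
  ultimately show ?thesis
    by (simp add: tendsto_cong)
qed

lemma tail_dependence2_if_homogeneous:
  assumes "subdistribution2 F"
    and "\<And>s x y. 0 < s \<Longrightarrow> 0 \<le> x \<Longrightarrow> 0 \<le> y \<Longrightarrow> F (s * x) (s * y) = s * F x y"
  shows "tail_dependence2 F"
  unfolding tail_dependence2_def
  using assms copula2_copula_completion tendsto_copula_completion by blast

theorem mainTheorem14:
  assumes "doubly_substochastic T"
  shows "subdistribution2 (F_op T) \<and> (equivariant T \<longrightarrow> tail_dependence2 (F_op T))"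
proof (intro conjI impI)
  show "subdistribution2 (F_op T)"
    using assms by (rule subdistribution2_F_op)
  assume "equivariant T"
  then show "tail_dependence2 (F_op T)"
    using assms by (intro tail_dependence2_if_homogeneous subdistribution2_F_op F_op_scale)
qed

end
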